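(* Let $\boldsymbol{\omega}\in\mathbb{R}^d$ satisfy $|\boldsymbol{\omega}\cdot\boldsymbol{\nu}|>\gamma_0|\boldsymbol{\nu}|^{-\tau}$ for all $\boldsymbol{\nu}\in\mathbb{Z}^d\setminus\{\boldsymbol{0}\}$, with $\gamma_0>0$, $\tau>d-1$. Let $\boldsymbol{\nu},\boldsymbol{\nu}'\in\mathbb{Z}^d$ with $\boldsymbol{\nu}\ne\boldsymbol{\nu}'$, and suppose $\delta_j(\boldsymbol{\omega}\cdot\boldsymbol{\nu})=\delta_{j'}(\boldsymbol{\omega}\cdot\boldsymbol{\nu}')$ for some $j,j'\in\{1,\ldots,d\}$. Then either $|\boldsymbol{\nu}-\boldsymbol{\nu}'|\ge|\boldsymbol{\nu}|+|\boldsymbol{\nu}'|-2$ or $|\boldsymbol{\nu}-\boldsymbol{\nu}'|=2$.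
   Context: $|\boldsymbol{\nu}|=|\nu_1|+\cdots+|\nu_d|$. For $j\in\{1,\ldots,d\}$ and $\boldsymbol{\nu}\in\mathbb{Z}^d$, $\delta_j(\boldsymbol{\omega}\cdot\boldsymbol{\nu}):=\min\{|\boldsymbol{\omega}\cdot\boldsymbol{\nu}-\omega_j|,|\boldsymbol{\omega}\cdot\boldsymbol{\nu}+\omega_j|\}=|\boldsymbol{\omega}\cdot(\boldsymbol{\nu}-\sigma(\boldsymbol{\nu},j)\boldsymbol{e}_j)|$, where $\sigma(\boldsymbol{\nu},j)\in\{\pm1\}$ is a minimizer and $\boldsymbol{e}_j$ the $j$-th standard basis vector. *)

theory Defs
  imports "HOL-Analysis.Analysis"
begin

text \<open>Integer vectors in Z^d are rendered as int ^ 'd, real vectors as real ^ 'd,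
  with the dimension d = CARD('d).\<close>

definition l1norm :: "int ^ 'd::finite \<Rightarrow> int" where
  "l1norm \<nu> = (\<Sum>i\<in>UNIV. \<bar>\<nu> $ i\<bar>)"

definition idot :: "real ^ 'd::finite \<Rightarrow> int ^ 'd \<Rightarrow> real" where
  "idot \<omega> \<nu> = (\<Sum>i\<in>UNIV. \<omega> $ i * real_of_int (\<nu> $ i))"

definition delta :: "real ^ 'd::finite \<Rightarrow> 'd \<Rightarrow> real \<Rightarrow> real" where
  "delta \<omega> j x = min \<bar>x - \<omega> $ j\<bar> \<bar>x + \<omega> $ j\<bar>"

end

theory Submission
  imports Defs
begin

text \<open>Writing \<open>\<delta>\<^sub>j(\<omega>\<cdot>\<nu>) = |\<omega>\<cdot>(\<nu> - \<sigma> e\<^sub>j)|\<close>, the hypothesis says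
  \<open>\<omega>\<cdot>(\<nu> - \<sigma> e\<^sub>j) = \<plusminus>\<omega>\<cdot>(\<nu>' - \<sigma>' e\<^sub>j\<^sub>')\<close>. The Diophantine condition makes \<open>\<mu> \<mapsto> \<omega>\<cdot>\<mu>\<close>
  injective on \<open>\<int>\<^sup>d\<close>, so \<open>\<nu> - \<nu>' = \<sigma> e\<^sub>j - \<sigma>' e\<^sub>j\<^sub>'\<close>, a nonzero vector of norm 2, or
  \<open>\<nu> + \<nu>' = \<sigma> e\<^sub>j + \<sigma>' e\<^sub>j\<^sub>'\<close>, whose norm is at most 2, and then
  \<open>|\<nu> - \<nu>'| \<ge> |\<nu>| + |\<nu>'| - |\<nu> + \<nu>'|\<close> gives the bound.\<close>

lemma idot_diff: "idot \<omega> (a - b) = idot \<omega> a - idot \<omega> b"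
  unfolding idot_def by (simp add: algebra_simps sum_subtractf)

lemma idot_add: "idot \<omega> (a + b) = idot \<omega> a + idot \<omega> b"
  unfolding idot_def by (simp add: algebra_simps sum.distrib)

lemma idot_axis: "idot \<omega> (axis k c) = \<omega> $ k * of_int c"
  unfolding idot_def axis_def by (simp add: if_distrib sum.delta cong: if_cong)

lemma delta_eq_abs_idot_axis:
  "\<exists>\<sigma>::int. \<bar>\<sigma>\<bar> = 1 \<and> delta \<omega> j (idot \<omega> \<nu>) = \<bar>idot \<omega> (\<nu> - axis j \<sigma>)\<bar>"
proof (cases "\<bar>idot \<omega> \<nu> - \<omega> $ j\<bar> \<le> \<bar>idot \<omega> \<nu> + \<omega> $ j\<bar>")
  case True
  then show ?thesis
    by (intro exI[of _ 1]) (simp add: delta_def idot_diff idot_axis min_def)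
next
  case False
  then show ?thesis
    by (intro exI[of _ "-1"]) (simp add: delta_def idot_diff idot_axis min_def)
qed

lemma idot_inj_if_diophantine:
  fixes \<omega> :: "real ^ 'd::finite"
  assumes "\<gamma>\<^sub>0 \<ge> 0"
    and "\<forall>\<mu> :: int ^ 'd. \<mu> \<noteq> 0 \<longrightarrow>
           \<bar>idot \<omega> \<mu>\<bar> > \<gamma>\<^sub>0 * real_of_int (l1norm \<mu>) powr (- \<tau>)"
    and "idot \<omega> a = idot \<omega> b"
  shows "a = b"
proof (rule ccontr)
  assume "a \<noteq> b"
  then have "\<bar>idot \<omega> (a - b)\<bar> > \<gamma>\<^sub>0 * real_of_int (l1norm (a - b)) powr (- \<tau>)"
    using assms(2) by simp
  moreover have "\<gamma>\<^sub>0 * real_of_int (l1norm (a - b)) powr (- \<tau>) \<ge> 0"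
    using assms(1) by simp
  ultimately show False
    using assms(3) by (simp add: idot_diff)
qed

lemma l1norm_add_le: "l1norm (a + b) \<le> l1norm a + l1norm b"
  unfolding l1norm_def by (simp add: sum.distrib[symmetric] sum_mono abs_triangle_ineq)

lemma l1norm_diff_ge: "l1norm a + l1norm b - l1norm (a + b) \<le> l1norm (a - b)"
proof -
  have "(\<Sum>i\<in>UNIV. \<bar>a $ i\<bar> + \<bar>b $ i\<bar> - \<bar>a $ i + b $ i\<bar>) \<le> (\<Sum>i\<in>UNIV. \<bar>a $ i - b $ i\<bar>)"
    by (rule sum_mono) auto
  then show ?thesis
    by (simp add: l1norm_def sum_subtractf sum.distrib)
qed

lemma l1norm_axis: "l1norm (axis j c) = \<bar>c\<bar>"
  unfolding l1norm_def axis_def by (simp add: if_distrib sum.delta cong: if_cong)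

lemma l1norm_axis_add_axis:
  assumes "j \<noteq> k"
  shows "l1norm (axis j a + axis k b) = \<bar>a\<bar> + \<bar>b\<bar>"
proof -
  have "l1norm (axis j a + axis k b) =
          (\<Sum>i\<in>UNIV. (if i = j then \<bar>a\<bar> else 0) + (if i = k then \<bar>b\<bar> else 0))"
    unfolding l1norm_def using assms by (intro sum.cong) (auto simp: axis_def)
  then show ?thesis
    by (simp add: sum.distrib)
qed

lemma l1norm_axis_diff_axis_unit:
  assumes "\<bar>\<sigma>\<bar> = 1" "\<bar>\<sigma>'\<bar> = 1" "axis j \<sigma> \<noteq> axis j' \<sigma>'"
  shows "l1norm (axis j \<sigma> - axis j' \<sigma>') = 2"
proof (cases "j = j'")
  case True
  then have "\<sigma> \<noteq> \<sigma>'"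
    using assms(3) by auto
  then have "\<bar>\<sigma> - \<sigma>'\<bar> = 2"
    using assms(1,2) by (auto simp: abs_if split: if_splits)
  moreover have "axis j \<sigma> - axis j \<sigma>' = axis j (\<sigma> - \<sigma>')"
    by (simp add: vec_eq_iff axis_def)
  ultimately show ?thesis
    using True by (simp add: l1norm_axis)
next
  case False
  have "axis j \<sigma> - axis j' \<sigma>' = axis j \<sigma> + axis j' (- \<sigma>')"
    by (simp add: vec_eq_iff axis_def)
  also have "l1norm \<dots> = 2"
    using False assms(1,2) by (simp add: l1norm_axis_add_axis)
  finally show ?thesis .
qed

theorem lemma3p1:
  fixes \<omega> :: "real ^ 'd::finite"
    and \<gamma>\<^sub>0 \<tau> :: real
    and \<nu> \<nu>' :: "int ^ 'd"
    and j j' :: 'd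
  assumes "\<gamma>\<^sub>0 > 0"
    and "\<tau> > real CARD('d) - 1"
    and "\<forall>\<mu> :: int ^ 'd. \<mu> \<noteq> 0 \<longrightarrow>
           \<bar>idot \<omega> \<mu>\<bar> > \<gamma>\<^sub>0 * real_of_int (l1norm \<mu>) powr (- \<tau>)"
    and "\<nu> \<noteq> \<nu>'"
    and "delta \<omega> j (idot \<omega> \<nu>) = delta \<omega> j' (idot \<omega> \<nu>')"
  shows "l1norm (\<nu> - \<nu>') \<ge> l1norm \<nu> + l1norm \<nu>' - 2 \<or> l1norm (\<nu> - \<nu>') = 2"
proof -
  obtain \<sigma> \<sigma>' :: int where \<sigma>: "\<bar>\<sigma>\<bar> = 1" and \<sigma>': "\<bar>\<sigma>'\<bar> = 1"
    and "\<bar>idot \<omega> (\<nu> - axis j \<sigma>)\<bar> = \<bar>idot \<omega> (\<nu>' - axis j' \<sigma>')\<bar>"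
    using delta_eq_abs_idot_axis assms(5) by metis
  then consider "idot \<omega> (\<nu> - axis j \<sigma>) = idot \<omega> (\<nu>' - axis j' \<sigma>')"
    | "idot \<omega> (\<nu> + \<nu>') = idot \<omega> (axis j \<sigma> + axis j' \<sigma>')"
    by (auto simp: abs_eq_iff idot_diff idot_add)
  then show ?thesis
  proof cases
    case 1
    then have "\<nu> - \<nu>' = axis j \<sigma> - axis j' \<sigma>'"
      using idot_inj_if_diophantine[OF _ assms(3)] assms(1) by (fastforce simp: algebra_simps)
    moreover have "axis j \<sigma> \<noteq> axis j' \<sigma>'"
      using calculation assms(4) by auto
    ultimately have "l1norm (\<nu> - \<nu>') = 2"
      using l1norm_axis_diff_axis_unit[OF \<sigma> \<sigma>'] by simp
    then show ?thesis ..
  next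
    case 2
    then have "\<nu> + \<nu>' = axis j \<sigma> + axis j' \<sigma>'"
      using idot_inj_if_diophantine[OF _ assms(3)] assms(1) by fastforce
    then have "l1norm (\<nu> + \<nu>') \<le> 2"
      using l1norm_add_le[of "axis j \<sigma>" "axis j' \<sigma>'"] \<sigma> \<sigma>' by (simp add: l1norm_axis)
    then show ?thesis
      using l1norm_diff_ge[of \<nu> \<nu>'] by simp
  qed
qed

end
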